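(* Let $\mathbf a=(a_0,a_1,a_2,a_3)\in\mathbb{Z}_2^4$ with $a_0a_1a_2a_3\ne0$. Then $X_{\mathbf a}$ has no $\mathbb{Q}_2$-rational point if and only if $\mathbf a$ is $\simeq$-equivalent to one of $(1,1,1,1),(1,1,5,5),(1,1,2,2),(1,1,10,10),(1,3,2,6),(1,3,10,14),(1,5,6,14)$.
   Context: $X_{\mathbf a}\subset\mathbb{P}^3_{\mathbb{Q}_2}$ is the quadric surface $\sum_{i=0}^3a_ix_i^2=0$. For $\mathbf a,\mathbf b\in\mathbb{Q}_2^{4}$ write $\mathbf a\simeq\mathbf b$ if there exist $\alpha,\alpha_0,\dots,\alpha_3\in\mathbb{Q}_2^\times$ and a permutation $\sigma$ of $\{0,1,2,3\}$ with $a_i=\alpha\, b_{\sigma(i)}\alpha_i^2$ for all $i$. *)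

theory Defs
  imports "HOL-Number_Theory.Cong" "HOL-Computational_Algebra.Fraction_Field" "HOL-Combinatorics.Permutations"
begin

section \<open>The 2-adic integers as an inverse limit of the rings Z/2^n Z\<close>

definition z2_seq :: "(nat \<Rightarrow> int) \<Rightarrow> bool" where
  "z2_seq f \<longleftrightarrow> (\<forall>m n. m \<le> n \<longrightarrow> [f n = f m] (mod 2 ^ m))"

definition z2_rel :: "(nat \<Rightarrow> int) \<Rightarrow> (nat \<Rightarrow> int) \<Rightarrow> bool" where
  "z2_rel f g \<longleftrightarrow> z2_seq f \<and> z2_seq g \<and> (\<forall>n. [f n = g n] (mod 2 ^ n))"

lemma z2_rel_part_equivp: "part_equivp z2_rel"
proof (rule part_equivpI)
  show "\<exists>x. z2_rel x x"
    by (rule exI[of _ "\<lambda>_. 0"]) (simp add: z2_rel_def z2_seq_def)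
  show "symp z2_rel"
    by (auto simp: symp_def z2_rel_def cong_sym)
  show "transp z2_rel"
    unfolding transp_def z2_rel_def using cong_trans by blast
qed

quotient_type z2 = "nat \<Rightarrow> int" / partial: z2_rel
  by (rule z2_rel_part_equivp)

lemma z2_seq_add: "z2_seq f \<Longrightarrow> z2_seq g \<Longrightarrow> z2_seq (\<lambda>n. f n + g n)"
  unfolding z2_seq_def by (auto intro: cong_add)

lemma z2_seq_mult: "z2_seq f \<Longrightarrow> z2_seq g \<Longrightarrow> z2_seq (\<lambda>n. f n * g n)"
  unfolding z2_seq_def by (auto intro: cong_mult)

lemma z2_seq_minus: "z2_seq f \<Longrightarrow> z2_seq (\<lambda>n. - f n)"
  unfolding z2_seq_def by (auto intro: cong_minus_minus_iff[THEN iffD2])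

lemma z2_seq_const: "z2_seq (\<lambda>_. c)"
  unfolding z2_seq_def by simp

instantiation z2 :: comm_ring_1
begin

lift_definition zero_z2 :: z2 is "\<lambda>_. 0"
  by (simp add: z2_rel_def z2_seq_def)

lift_definition one_z2 :: z2 is "\<lambda>_. 1"
  by (simp add: z2_rel_def z2_seq_def)

lift_definition plus_z2 :: "z2 \<Rightarrow> z2 \<Rightarrow> z2" is "\<lambda>f g n. f n + g n"
  by (auto simp: z2_rel_def intro: z2_seq_add cong_add)

lift_definition times_z2 :: "z2 \<Rightarrow> z2 \<Rightarrow> z2" is "\<lambda>f g n. f n * g n"
  by (auto simp: z2_rel_def intro: z2_seq_mult cong_mult)

lift_definition uminus_z2 :: "z2 \<Rightarrow> z2" is "\<lambda>f n. - f n"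
  by (auto simp: z2_rel_def intro: z2_seq_minus cong_minus_minus_iff[THEN iffD2])

lift_definition minus_z2 :: "z2 \<Rightarrow> z2 \<Rightarrow> z2" is "\<lambda>f g n. f n - g n"
  by (auto simp: z2_rel_def z2_seq_def intro: cong_diff)

instance
proof
  fix a b c :: z2
  show "a * b * c = a * (b * c)"
    by transfer (auto simp: z2_rel_def algebra_simps intro: z2_seq_mult)
  show "a * b = b * a"
    by transfer (auto simp: z2_rel_def algebra_simps intro: z2_seq_mult)
  show "1 * a = a"
    by transfer (auto simp: z2_rel_def)
  show "a + b + c = a + (b + c)"
    by transfer (auto simp: z2_rel_def algebra_simps intro: z2_seq_add)
  show "a + b = b + a"
    by transfer (auto simp: z2_rel_def algebra_simps intro: z2_seq_add)
  show "0 + a = a"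
    by transfer (auto simp: z2_rel_def)
  show "- a + a = 0"
    by transfer (auto simp: z2_rel_def z2_seq_const)
  show "a - b = a + - b"
    by transfer (auto simp: z2_rel_def z2_seq_def intro: cong_diff)
  show "(a + b) * c = a * c + b * c"
    by transfer (auto simp: z2_rel_def algebra_simps intro: z2_seq_mult z2_seq_add)
  show "(0::z2) \<noteq> 1"
    by transfer (auto simp: z2_rel_def z2_seq_def cong_def dest: spec[of _ 1])
qed

end

lemma not_dvd_pow2_mult:
  fixes a b :: int
  assumes "\<not> 2 ^ m dvd a" "\<not> 2 ^ k dvd b"
  shows "\<not> 2 ^ (m + k) dvd a * b"
  using assms
proof (induction m arbitrary: a)
  case 0
  then show ?case by simp
next
  case (Suc m)
  show ?case
  proof (cases "even a")
    case True
    then obtain c where c: "a = 2 * c" by blast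
    with Suc.prems have "\<not> 2 ^ m dvd c" by simp
    with Suc.IH[OF this Suc.prems(2)] show ?thesis
      by (simp add: c mult.assoc)
  next
    case False
    hence "coprime (2 ^ (Suc m + k)) a" by simp
    hence "2 ^ (Suc m + k) dvd a * b \<Longrightarrow> 2 ^ (Suc m + k) dvd b"
      using coprime_dvd_mult_right_iff by blast
    moreover have "2 ^ (Suc m + k) dvd b \<Longrightarrow> 2 ^ k dvd (b::int)"
      by (metis dvd_mult_left le_add2 le_imp_power_dvd dvd_trans)
    ultimately show ?thesis using Suc.prems by blast
  qed
qed

lemma z2_nonzero_witness:
  assumes "z2_seq f" "\<not> (\<forall>n. [f n = 0] (mod 2 ^ n))"
  shows "\<exists>m. \<forall>N\<ge>m. \<not> 2 ^ m dvd f N"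
proof -
  from assms(2) obtain m where m: "\<not> [f m = 0] (mod 2 ^ m)" by blast
  have "\<not> 2 ^ m dvd f N" if "N \<ge> m" for N
  proof
    assume "2 ^ m dvd f N"
    moreover have "[f N = f m] (mod 2 ^ m)" using assms(1) that by (simp add: z2_seq_def)
    ultimately have "[f m = 0] (mod 2 ^ m)"
      by (metis cong_0_iff cong_dvd_iff)
    with m show False by simp
  qed
  thus ?thesis by blast
qed

instance z2 :: idom
proof
  fix a b :: z2
  assume "a \<noteq> 0" "b \<noteq> 0"
  thus "a * b \<noteq> 0"
  proof (transfer)
    fix f g
    assume f: "z2_rel f f" and g: "z2_rel g g"
      and nf: "\<not> z2_rel f (\<lambda>_. 0)" and ng: "\<not> z2_rel g (\<lambda>_. 0)"
    from f nf obtain m where m: "\<forall>N\<ge>m. \<not> 2 ^ m dvd f N"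
      using z2_nonzero_witness by (auto simp: z2_rel_def z2_seq_const)
    from g ng obtain k where k: "\<forall>N\<ge>k. \<not> 2 ^ k dvd g N"
      using z2_nonzero_witness by (auto simp: z2_rel_def z2_seq_const)
    have "\<not> 2 ^ (m + k) dvd f (m + k) * g (m + k)"
      using m k not_dvd_pow2_mult by simp
    thus "\<not> z2_rel (\<lambda>n. f n * g n) (\<lambda>_. 0)"
      by (auto simp: z2_rel_def cong_0_iff)
  qed
qed

type_synonym Q2 = "z2 fract"

definition z2_to_Q2 :: "z2 \<Rightarrow> Q2" where
  "z2_to_Q2 z = Fract z 1"

text \<open>The diagonal quadric sum a_i x_i^2 = 0 in P^3 has a K-rational point iff there is
  a nonzero vector (x_0,...,x_3) in K^4 with sum a_i x_i^2 = 0.\<close>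
definition has_rational_point :: "'a::field list \<Rightarrow> bool" where
  "has_rational_point a \<longleftrightarrow>
     (\<exists>x::'a list. length x = 4 \<and> (\<exists>i<4. x ! i \<noteq> 0) \<and> (\<Sum>i<4. a ! i * (x ! i)^2) = 0)"

definition quad_equiv :: "'a::field list \<Rightarrow> 'a list \<Rightarrow> bool" (infix \<open>\<simeq>\<^sub>q\<close> 50) where
  "a \<simeq>\<^sub>q b \<longleftrightarrow>
     (\<exists>\<alpha> (\<alpha>s::nat \<Rightarrow> 'a) \<sigma>. \<alpha> \<noteq> 0 \<and> (\<forall>i<4. \<alpha>s i \<noteq> 0) \<and> \<sigma> permutes {..<4} \<and>
        (\<forall>i<4. a ! i = \<alpha> * b ! (\<sigma> i) * (\<alpha>s i)^2))"

end

theory Submission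
  imports Defs
begin

(* Every nonzero 2-adic number is a square times one of 1, 2, 3, 5, 6, 7, 10, 14, so after
   rescaling and permuting the variables the coefficients may be taken to be a sorted list of
   these representatives. For integer coefficients not divisible by 4 the form is isotropic over
   Q2 exactly when  sum a_i x_i^2 = 0 (mod 16)  has a solution with some x_i odd: a primitive
   2-adic zero reduces to such a solution, and conversely such a solution is completed to a
   genuine zero because integers congruent to 1 modulo 8 are squares in Z2 (Hensel's lemma).
   This congruence criterion is decided by a finite computation; the sorted representative
   forms it declares anisotropic are, after scaling, permutations of the seven listed forms. *)

lift_definition z2_cong :: "nat \<Rightarrow> z2 \<Rightarrow> int \<Rightarrow> bool" is "\<lambda>n f k. [f n = k] (mod 2 ^ n)"
  by (auto simp: z2_rel_def intro: cong_trans cong_sym)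

lemma z2_cong_add: "z2_cong n x a \<Longrightarrow> z2_cong n y b \<Longrightarrow> z2_cong n (x + y) (a + b)"
  by transfer (auto intro: cong_add)

lemma z2_cong_mult: "z2_cong n x a \<Longrightarrow> z2_cong n y b \<Longrightarrow> z2_cong n (x * y) (a * b)"
  by transfer (auto intro: cong_mult)

lemma z2_cong_uminus: "z2_cong n x a \<Longrightarrow> z2_cong n (- x) (- a)"
  by transfer (auto intro: cong_minus_minus_iff[THEN iffD2])

lemma z2_cong_diff: "z2_cong n x a \<Longrightarrow> z2_cong n y b \<Longrightarrow> z2_cong n (x - y) (a - b)"
  using z2_cong_add[OF _ z2_cong_uminus] by (metis diff_conv_add_uminus)

lemma z2_cong_one: "z2_cong n 1 1"
  by transfer simp

lemma z2_cong_zero: "z2_cong n 0 0"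
  by transfer simp

lemma z2_cong_power: "z2_cong n x a \<Longrightarrow> z2_cong n (x ^ k) (a ^ k)"
  by (induction k) (auto simp: z2_cong_one intro: z2_cong_mult)

lemma z2_cong_of_nat: "z2_cong n (of_nat k) (int k)"
  by (induction k) (auto simp: z2_cong_zero add.commute intro: z2_cong_add[OF z2_cong_one])

lemma z2_cong_of_int: "z2_cong n (of_int k) k"
proof (cases k rule: int_cases)
  case (neg m)
  then show ?thesis
    using z2_cong_uminus[OF z2_cong_of_nat[of n "Suc m"]] by simp
qed (simp add: z2_cong_of_nat)

lemma z2_cong_exists: "\<exists>k. z2_cong n x k"
  by transfer (rule exI, rule cong_refl)

lemma z2_cong_unique: "z2_cong n x a \<Longrightarrow> z2_cong n x b \<Longrightarrow> [a = b] (mod 2 ^ n)"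
  by transfer (meson cong_sym cong_trans)

lemma z2_cong_trans: "z2_cong n x a \<Longrightarrow> [a = b] (mod 2 ^ n) \<Longrightarrow> z2_cong n x b"
  by transfer (meson cong_trans)

lemma z2_cong_mono:
  assumes "m \<le> n" "z2_cong n x a"
  shows "z2_cong m x a"
  using assms
proof transfer
  fix m n f a
  assume "m \<le> n" "z2_rel f f" "[f n = a] (mod 2 ^ n)"
  then have "[f m = f n] (mod 2 ^ m)" "[f n = a] (mod 2 ^ m)"
    by (auto simp: z2_rel_def z2_seq_def cong_sym intro: cong_dvd_modulus le_imp_power_dvd)
  then show "[f m = a] (mod 2 ^ m)"
    by (rule cong_trans)
qed

lemma z2_cong_0: "z2_cong 0 x a"
  using z2_cong_exists[of 0 x] z2_cong_trans by (metis cong_def mod_by_1 power_0)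

lemma z2_eq_0_if_cong: "(\<And>n. z2_cong n x 0) \<Longrightarrow> x = 0"
  by transfer (auto simp: z2_rel_def z2_seq_const)

lemma z2_cong_parity: "z2_cong 1 x 0 \<or> z2_cong 1 x 1"
proof -
  obtain k where "z2_cong 1 x k"
    using z2_cong_exists by blast
  moreover have "[k = 0] (mod 2 ^ 1) \<or> [k = 1] (mod 2 ^ 1)"
    by (auto simp: cong_def)
  ultimately show ?thesis
    using z2_cong_trans by blast
qed

lemma z2_cong_pow_mult: "z2_cong n (2 ^ n * w) 0"
proof -
  obtain b where "z2_cong n w b"
    using z2_cong_exists by blast
  then have "z2_cong n (2 ^ n * w) (2 ^ n * b)"
    using z2_cong_mult[OF z2_cong_power[OF z2_cong_of_int[of n 2]]] by simp
  then show ?thesis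
    by (rule z2_cong_trans) (simp add: cong_0_iff)
qed

lemma z2_of_int_eq_0_iff: "(of_int t :: z2) = 0 \<longleftrightarrow> t = 0"
proof
  assume "(of_int t :: z2) = 0"
  then have "z2_cong (nat \<bar>t\<bar>) 0 t"
    using z2_cong_of_int[of "nat \<bar>t\<bar>" t] by simp
  then have "[t = 0] (mod 2 ^ nat \<bar>t\<bar>)"
    using z2_cong_unique z2_cong_zero cong_sym by blast
  then have "2 ^ nat \<bar>t\<bar> dvd t"
    by (simp add: cong_0_iff)
  moreover have "int (nat \<bar>t\<bar>) < int (2 ^ nat \<bar>t\<bar>)"
    by (simp only: of_nat_less_iff less_exp)
  then have "\<bar>t\<bar> < 2 ^ nat \<bar>t\<bar>"
    by simp
  ultimately show "t = 0"
    using dvd_imp_le_int by force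
qed simp

instance z2 :: ring_char_0
proof
  show "inj (of_nat :: nat \<Rightarrow> z2)"
  proof (rule injI)
    fix m n :: nat
    assume "(of_nat m :: z2) = of_nat n"
    then have "(of_int (int m - int n) :: z2) = 0"
      by simp
    then show "m = n"
      unfolding z2_of_int_eq_0_iff by simp
  qed
qed

lemma z2_abs_cases: obtains f where "z2_seq f" "x = abs_z2 f"
  by (induct x rule: z2.abs_induct) (auto simp: z2_rel_def)

lemma z2_abs_eq_iff: "z2_seq f \<Longrightarrow> z2_seq g \<Longrightarrow> abs_z2 f = abs_z2 g \<longleftrightarrow> (\<forall>n. [f n = g n] (mod 2 ^ n))"
  using Quotient_rel[OF Quotient_z2] by (auto simp: z2_rel_def)

lemma z2_cong_abs: "z2_seq f \<Longrightarrow> z2_cong n (abs_z2 f) k \<longleftrightarrow> [f n = k] (mod 2 ^ n)"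
  by (simp add: z2_cong.abs_eq z2_rel_def)

lemma z2_abs_const: "abs_z2 (\<lambda>_. c) = of_int c"
proof -
  have "z2_cong n (abs_z2 (\<lambda>_. c) - of_int c) (c - c)" for n
    using z2_cong_abs[OF z2_seq_const] by (intro z2_cong_diff z2_cong_of_int) simp
  then show ?thesis
    using z2_eq_0_if_cong by fastforce
qed

lemma z2_pow_dvd_if_cong_0:
  assumes "z2_cong k x 0"
  shows "2 ^ k dvd x"
proof -
  obtain f where f: "z2_seq f" "x = abs_z2 f"
    using z2_abs_cases .
  have "[f (n + k) = f k] (mod 2 ^ k)" "[f k = 0] (mod 2 ^ k)" for n
    using f assms by (simp_all add: z2_seq_def z2_cong_abs)
  then have dvd: "2 ^ k dvd f (n + k)" for n
    using cong_trans cong_0_iff by blast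
  define g where "g n = f (n + k) div 2 ^ k" for n
  have fg: "f (n + k) = 2 ^ k * g n" for n
    using dvd[of n] by (simp add: g_def)
  have "z2_seq g"
    unfolding z2_seq_def
  proof (intro allI impI)
    fix m n :: nat
    assume "m \<le> n"
    then have "[f (n + k) = f (m + k)] (mod 2 ^ (m + k))"
      using f(1) by (simp add: z2_seq_def)
    then have "[f (n + k) = f (m + k)] (mod 2 ^ k * 2 ^ m)"
      by (simp add: power_add mult.commute)
    then show "[g n = g m] (mod 2 ^ m)"
      by (simp add: fg cong_iff_dvd_diff flip: right_diff_distrib)
  qed
  have "x = abs_z2 (\<lambda>n. 2 ^ k * g n)"
  proof -
    have "[f n = 2 ^ k * g n] (mod 2 ^ n)" for n
      using f(1) by (simp add: z2_seq_def flip: fg) (metis cong_sym le_add1)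
    then show ?thesis
      using f z2_abs_eq_iff z2_seq_mult[OF z2_seq_const \<open>z2_seq g\<close>] by auto
  qed
  also have "\<dots> = 2 ^ k * abs_z2 g"
    using times_z2.abs_eq[of "\<lambda>_. 2 ^ k" g] \<open>z2_seq g\<close>
    by (simp add: z2_rel_def z2_seq_const z2_abs_const)
  finally show ?thesis
    by simp
qed

lemma z2_odd_part:
  assumes "x \<noteq> 0"
  obtains k u where "x = 2 ^ k * u" "z2_cong 1 u 1"
proof -
  have "\<exists>k u. x = 2 ^ k * u \<and> z2_cong 1 u 1" if "\<not> z2_cong n x 0" for n
    using that
  proof (induction n arbitrary: x)
    case 0
    then show ?case
      using z2_cong_0 by blast
  next
    case (Suc n)
    show ?case
    proof (cases "z2_cong 1 x 1")
      case False
      then obtain w where w: "x = 2 * w"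
        using z2_cong_parity z2_pow_dvd_if_cong_0[of 1 x] by auto
      have "\<not> z2_cong n w 0"
      proof
        assume "z2_cong n w 0"
        then obtain w' where "x = 2 ^ Suc n * w'"
          using z2_pow_dvd_if_cong_0 by (auto simp: w dvd_def)
        then show False
          using Suc.prems z2_cong_pow_mult[of "Suc n" w'] by simp
      qed
      then obtain k u where "w = 2 ^ k * u" "z2_cong 1 u 1"
        using Suc.IH by blast
      then show ?thesis
        by (intro exI[of _ "Suc k"] exI[of _ u]) (simp add: w)
    qed (metis power_0 mult_1)
  qed
  then show ?thesis
    using that assms z2_eq_0_if_cong by blast
qed

section \<open>Square roots by Hensel lifting\<close>

lemma odd_square_lift:
  fixes s v :: int
  assumes "odd s" "3 \<le> n" "[s\<^sup>2 = v] (mod 2 ^ n)" "\<not> [s\<^sup>2 = v] (mod 2 ^ (n + 1))"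
  shows "[(s + 2 ^ (n - 1))\<^sup>2 = v] (mod 2 ^ (n + 1))"
proof -
  obtain m where n: "n = m + 3"
    using assms(2) by (metis add.commute le_Suc_ex)
  obtain t where t: "s\<^sup>2 - v = 2 ^ n * t"
    using assms(3) by (metis cong_iff_dvd_diff dvd_def)
  have "odd t"
    using assms(4) t by (auto simp: cong_iff_dvd_diff cong_sym_eq[of v] elim!: evenE)
  with assms(1) obtain r where r: "t + s = 2 * r"
    by (metis evenE odd_add)
  have "(s + 2 ^ (m + 2))\<^sup>2 = s\<^sup>2 + 2 ^ (m + 3) * s + 2 ^ (m + 4) * 2 ^ m"
    by (simp add: power2_eq_square algebra_simps power_add)
  then have "(s + 2 ^ (n - 1))\<^sup>2 - v = 2 ^ (m + 3) * (t + s) + 2 ^ (m + 4) * 2 ^ m"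
    using t by (simp add: n algebra_simps)
  also have "\<dots> = 2 ^ (n + 1) * (r + 2 ^ m)"
    unfolding r by (simp add: n algebra_simps power_add)
  finally show ?thesis
    by (simp add: cong_iff_dvd_diff cong_sym_eq[of v])
qed

fun hensel_root :: "(nat \<Rightarrow> int) \<Rightarrow> nat \<Rightarrow> int" where
  "hensel_root f 0 = 1"
| "hensel_root f (Suc k) =
    (let s = hensel_root f k in if [s\<^sup>2 = f (k + 4)] (mod 2 ^ (k + 4)) then s else s + 2 ^ (k + 2))"

lemma hensel_root_cong_Suc: "[hensel_root f (Suc k) = hensel_root f k] (mod 2 ^ (k + 2))"
  by (simp add: Let_def cong_def)

lemma hensel_root_cong:
  assumes "m \<le> n"
  shows "[hensel_root f n = hensel_root f m] (mod 2 ^ m)"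
  using assms
proof (induction n rule: dec_induct)
  case (step n)
  have "[hensel_root f (Suc n) = hensel_root f n] (mod 2 ^ m)"
    by (rule cong_dvd_modulus[OF hensel_root_cong_Suc]) (use step.hyps in \<open>simp add: le_imp_power_dvd\<close>)
  then show ?case
    using step.IH by (rule cong_trans)
qed simp

lemma hensel_root_square:
  assumes "z2_seq f" "[f 3 = 1] (mod 8)"
  shows "odd (hensel_root f k) \<and> [(hensel_root f k)\<^sup>2 = f (k + 3)] (mod 2 ^ (k + 3))"
proof (induction k)
  case 0
  then show ?case
    using assms(2) by (simp add: cong_sym)
next
  case (Suc k)
  define s where "s = hensel_root f k"
  have "[f (k + 4) = f (k + 3)] (mod 2 ^ (k + 3))"
    using assms(1) by (simp add: z2_seq_def)
  then have s: "odd s" "[s\<^sup>2 = f (k + 4)] (mod 2 ^ (k + 3))"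
    using Suc.IH cong_trans cong_sym unfolding s_def by blast+
  have k4: "Suc k + 3 = k + 4"
    by simp
  have "odd (hensel_root f (Suc k)) \<and> [(hensel_root f (Suc k))\<^sup>2 = f (k + 4)] (mod 2 ^ (k + 4))"
  proof (cases "[s\<^sup>2 = f (k + 4)] (mod 2 ^ (k + 4))")
    case True
    then show ?thesis
      using s by (simp add: s_def Let_def ac_simps)
  next
    case False
    then have "[(s + 2 ^ (k + 2))\<^sup>2 = f (k + 4)] (mod 2 ^ (k + 4))"
      using odd_square_lift[of s "k + 3" "f (k + 4)"] s by (simp add: ac_simps)
    then show ?thesis
      using s False by (simp add: s_def Let_def)
  qed
  then show ?case
    unfolding k4 .
qed

lemma z2_square_if_cong_1_mod_8:
  assumes "z2_cong 3 v 1"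
  obtains y where "v = y\<^sup>2"
proof -
  obtain f where f: "z2_seq f" "v = abs_z2 f"
    using z2_abs_cases .
  have f3: "[f 3 = 1] (mod 8)"
    using assms f by (simp add: z2_cong_abs)
  define g where "g = hensel_root f"
  have g: "z2_seq g"
    using hensel_root_cong by (simp add: z2_seq_def g_def)
  have "[g n * g n = f n] (mod 2 ^ n)" for n
  proof -
    have "[(g n)\<^sup>2 = f (n + 3)] (mod 2 ^ (n + 3))"
      using hensel_root_square[OF f(1) f3] by (simp add: g_def)
    then have "[(g n)\<^sup>2 = f (n + 3)] (mod 2 ^ n)"
      by (rule cong_dvd_modulus) (simp add: le_imp_power_dvd)
    moreover have "[f (n + 3) = f n] (mod 2 ^ n)"
      using f(1) by (simp add: z2_seq_def)
    ultimately show ?thesis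
      by (simp add: power2_eq_square cong_trans)
  qed
  then have "abs_z2 (\<lambda>n. g n * g n) = v"
    using z2_abs_eq_iff[OF z2_seq_mult[OF g g] f(1)] f(2) by simp
  moreover have "abs_z2 (\<lambda>n. g n * g n) = (abs_z2 g)\<^sup>2"
    using times_z2.abs_eq[of g g] g by (simp add: z2_rel_def power2_eq_square)
  ultimately show ?thesis
    using that by metis
qed

section \<open>Square classes of 2-adic numbers\<close>

instance fract :: ("{idom,ring_char_0}") ring_char_0
proof
  show "inj (of_nat :: nat \<Rightarrow> 'a fract)"
    by (rule injI) (simp add: of_nat_fract eq_fract)
qed

lemma z2_to_Q2_add [simp]: "z2_to_Q2 (a + b) = z2_to_Q2 a + z2_to_Q2 b"
  by (simp add: z2_to_Q2_def)

lemma z2_to_Q2_mult [simp]: "z2_to_Q2 (a * b) = z2_to_Q2 a * z2_to_Q2 b"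
  by (simp add: z2_to_Q2_def)

lemma z2_to_Q2_eq_iff [simp]: "z2_to_Q2 a = z2_to_Q2 b \<longleftrightarrow> a = b"
  by (simp add: z2_to_Q2_def eq_fract)

lemma z2_to_Q2_0 [simp]: "z2_to_Q2 0 = 0"
  by (simp add: z2_to_Q2_def fract_collapse)

lemma z2_to_Q2_1 [simp]: "z2_to_Q2 1 = 1"
  by (simp add: z2_to_Q2_def fract_collapse)

lemma z2_to_Q2_eq_0_iff [simp]: "z2_to_Q2 a = 0 \<longleftrightarrow> a = 0"
  using z2_to_Q2_eq_iff[of a 0] by simp

lemma z2_to_Q2_power [simp]: "z2_to_Q2 (a ^ n) = z2_to_Q2 a ^ n"
  by (induction n) simp_all

lemma z2_to_Q2_of_int [simp]: "z2_to_Q2 (of_int k) = of_int k"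
proof -
  have nat: "z2_to_Q2 (of_nat n) = of_nat n" for n
    by (simp add: z2_to_Q2_def Fract_of_nat_eq)
  show ?thesis
  proof (cases k rule: int_cases)
    case (nonneg n)
    then show ?thesis
      using nat by simp
  next
    case (neg n)
    have "z2_to_Q2 (- a) = - z2_to_Q2 a" for a
      by (simp add: z2_to_Q2_def)
    then show ?thesis
      using nat neg by (metis of_int_minus of_int_of_nat_eq)
  qed
qed

lemma z2_to_Q2_numeral [simp]: "z2_to_Q2 (numeral w) = numeral w"
  using z2_to_Q2_of_int[of "numeral w"] by simp

lemma square_mod_16_cases:
  fixes x :: int
  shows "even x \<and> x\<^sup>2 mod 16 \<in> {0, 4} \<or> odd x \<and> x\<^sup>2 mod 16 \<in> {1, 9}"
proof -
  define q r where "q = x div 8" and "r = x mod 8"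
  have "x = 8 * q + r"
    by (simp add: q_def r_def)
  then have "x\<^sup>2 = r\<^sup>2 + 16 * (4 * q\<^sup>2 + q * r)"
    by (simp add: power2_eq_square algebra_simps)
  then have sq: "x\<^sup>2 mod 16 = r\<^sup>2 mod 16"
    by (simp only: mod_mult_self2)
  have ev: "even x \<longleftrightarrow> even r"
    by (simp add: r_def dvd_mod_iff)
  have "r \<in> {0..7}"
    by (simp add: r_def)
  then have "r = 0 \<or> r = 1 \<or> r = 2 \<or> r = 3 \<or> r = 4 \<or> r = 5 \<or> r = 6 \<or> r = 7"
    by auto
  then show ?thesis
    using sq ev by auto
qed

lemma odd_square_cong_1_mod_8:
  fixes x :: int
  assumes "odd x"
  shows "[x\<^sup>2 = 1] (mod 8)"
proof -
  have "x\<^sup>2 mod 16 \<in> {1, 9}"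
    using square_mod_16_cases[of x] assms by auto
  moreover have "x\<^sup>2 mod 8 = x\<^sup>2 mod 16 mod 8"
    by (simp add: mod_mod_cancel)
  ultimately show ?thesis
    by (auto simp: cong_def)
qed

lemma Q2_square_of_int:
  assumes "[t = 1] (mod 8)"
  obtains q :: Q2 where "of_int t = q\<^sup>2"
proof -
  have "z2_cong 3 (of_int t) 1"
    using z2_cong_trans[OF z2_cong_of_int] assms by simp
  then obtain y :: z2 where "of_int t = y\<^sup>2"
    by (rule z2_square_if_cong_1_mod_8)
  then have "of_int t = (z2_to_Q2 y)\<^sup>2"
    by (metis z2_to_Q2_of_int z2_to_Q2_power)
  then show ?thesis
    using that by blast
qed

lemma Q2_odd_square_class:
  fixes m :: int
  assumes "odd m"
  obtains q :: Q2 where "q \<noteq> 0" "of_int m = of_int (m mod 8) * q\<^sup>2"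
proof -
  define r where "r = m mod 8"
  have "odd r"
    using assms by (simp add: r_def dvd_mod_iff)
  have "[m * r = r * r] (mod 8)"
    by (simp add: r_def cong_def mod_mult_left_eq)
  then have "[m * r = 1] (mod 8)"
    using odd_square_cong_1_mod_8[OF \<open>odd r\<close>] cong_trans by (simp add: power2_eq_square)
  then obtain y :: Q2 where y: "of_int (m * r) = y\<^sup>2"
    by (rule Q2_square_of_int)
  have "(of_int r :: Q2) \<noteq> 0"
    using \<open>odd r\<close> by auto
  moreover have "y \<noteq> 0"
    using y assms \<open>odd r\<close> by auto
  moreover have "of_int m = of_int r * (y / of_int r)\<^sup>2"
    using y \<open>(of_int r :: Q2) \<noteq> 0\<close> by (simp add: field_simps power2_eq_square)
  ultimately show ?thesis
    using that[of "y / of_int r"] by (simp add: r_def)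
qed

definition square_class_reps :: "int list" where
  "square_class_reps = [1, 2, 3, 5, 6, 7, 10, 14]"

function square_class :: "int \<Rightarrow> int" where
  "square_class n =
    (if n \<noteq> 0 \<and> 4 dvd n then square_class (n div 4)
     else if odd n then n mod 8 else 2 * (n div 2 mod 8))"
  by auto
termination
  by (relation "measure (nat \<circ> abs)") auto

declare square_class.simps [simp del]

lemma odd_mod_8_cases:
  fixes m :: int
  assumes "odd m"
  shows "m mod 8 \<in> {1, 3, 5, 7}"
proof -
  have "odd (m mod 8)" "m mod 8 \<in> {0..7}"
    using assms by (simp_all add: dvd_mod_iff)
  then show ?thesis
    by auto presburger
qed

lemma square_class_mem: "n \<noteq> 0 \<Longrightarrow> square_class n \<in> set square_class_reps"
proof (induction n rule: square_class.induct)
  case (1 n)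
  show ?case
  proof (cases "4 dvd n")
    case True
    then show ?thesis
      using 1 by (auto simp: square_class.simps[of n])
  next
    case False
    then have "odd n \<or> odd (n div 2)"
      by (metis dvd_mult_div_cancel mult_dvd_mono numeral_Bit0_eq_double dvd_refl)
    then show ?thesis
      using False odd_mod_8_cases by (auto simp: square_class.simps[of n] square_class_reps_def)
  qed
qed

lemma Q2_square_class:
  assumes "n \<noteq> 0"
  obtains q :: Q2 where "q \<noteq> 0" "of_int n = of_int (square_class n) * q\<^sup>2"
  using assms
proof (induction n arbitrary: thesis rule: square_class.induct)
  case (1 n)
  show ?case
  proof (cases "4 dvd n")
    case True
    then obtain m where n: "n = 4 * m"
      by blast
    then obtain q :: Q2 where "q \<noteq> 0" "of_int m = of_int (square_class m) * q\<^sup>2"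
      using "1.IH" "1.prems"(2) by auto
    moreover have "square_class n = square_class m"
      using "1.prems"(2) by (simp add: n square_class.simps[of "4 * m"])
    ultimately show ?thesis
      using "1.prems"(1)[of "2 * q"] n by (simp add: power2_eq_square)
  next
    case False
    show ?thesis
    proof (cases "odd n")
      case True
      then show ?thesis
        using Q2_odd_square_class[of n] "1.prems"(1) False
        by (auto simp: square_class.simps[of n])
    next
      case even: False
      then obtain m where n: "n = 2 * m"
        by blast
      have "odd m"
        using False by (auto simp: n)
      then obtain q :: Q2 where "q \<noteq> 0" "of_int m = of_int (m mod 8) * q\<^sup>2"
        using Q2_odd_square_class by blast
      moreover have "square_class n = 2 * (m mod 8)"
        using False \<open>odd m\<close> by (simp add: n square_class.simps[of "2 * m"])
      ultimately show ?thesis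
        using "1.prems"(1)[of q] by (simp add: n)
    qed
  qed
qed

lemma z2_square_class:
  assumes "z \<noteq> 0"
  obtains c q where "c \<in> set square_class_reps" "q \<noteq> 0" "z2_to_Q2 z = of_int c * q\<^sup>2"
proof -
  obtain k u where z: "z = 2 ^ k * u" and u: "z2_cong 1 u 1"
    using z2_odd_part[OF assms] .
  obtain r where r: "z2_cong 3 u r"
    using z2_cong_exists by blast
  then have "[r = 1] (mod 2)"
    using z2_cong_unique[OF z2_cong_mono[OF _ r] u] by simp
  then have "odd r"
    by (simp add: cong_def odd_iff_mod_2_eq_one)
  have "[r * r = 1] (mod 8)"
    using odd_square_cong_1_mod_8[OF \<open>odd r\<close>] by (simp add: power2_eq_square)
  then have "z2_cong 3 (u * of_int r) 1"
    using z2_cong_trans[OF z2_cong_mult[OF r z2_cong_of_int]] by simp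
  then obtain y where y: "u * of_int r = y\<^sup>2"
    by (rule z2_square_if_cong_1_mod_8)
  have "u \<noteq> 0"
    using u z2_cong_unique[OF _ z2_cong_zero] by (fastforce simp: cong_def)
  have r0: "(of_int r :: Q2) \<noteq> 0"
    using \<open>odd r\<close> by auto
  have "z2_to_Q2 y \<noteq> 0"
    using y \<open>u \<noteq> 0\<close> \<open>odd r\<close> z2_of_int_eq_0_iff by fastforce
  have "2 ^ k * r \<noteq> 0"
    using \<open>odd r\<close> by auto
  then obtain q :: Q2 where q: "q \<noteq> 0" "of_int (2 ^ k * r) = of_int (square_class (2 ^ k * r)) * q\<^sup>2"
    by (rule Q2_square_class)
  have "z2_to_Q2 z = of_int (2 ^ k * r) * (z2_to_Q2 y / of_int r)\<^sup>2"
    using arg_cong[OF y, of z2_to_Q2] r0 by (simp add: z field_simps power2_eq_square)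
  also have "\<dots> = of_int (square_class (2 ^ k * r)) * (q * z2_to_Q2 y / of_int r)\<^sup>2"
    unfolding q(2) by (simp add: power_mult_distrib power_divide)
  finally show ?thesis
    using that square_class_mem[OF \<open>2 ^ k * r \<noteq> 0\<close>] q(1) r0 \<open>z2_to_Q2 y \<noteq> 0\<close>
    by (metis divide_eq_0_iff mult_eq_0_iff)
qed

lemma quad_equiv_sym:
  assumes "a \<simeq>\<^sub>q b"
  shows "b \<simeq>\<^sub>q a"
proof -
  obtain \<alpha> s \<sigma> where h: "\<alpha> \<noteq> 0" "\<And>i. i < 4 \<Longrightarrow> s i \<noteq> 0" "\<sigma> permutes {..<4}"
    "\<And>i. i < 4 \<Longrightarrow> a ! i = \<alpha> * b ! (\<sigma> i) * (s i)\<^sup>2"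
    using assms unfolding quad_equiv_def by blast
  define \<tau> where "\<tau> = inv \<sigma>"
  have \<tau>: "\<tau> permutes {..<4}"
    using permutes_inv[OF h(3)] by (simp add: \<tau>_def)
  have \<tau>4: "\<tau> j < 4" if "j < 4" for j
    using permutes_in_image[OF \<tau>] that by simp
  have \<sigma>\<tau>: "\<sigma> (\<tau> j) = j" for j
    using permutes_inverses(1)[OF h(3)] by (simp add: \<tau>_def)
  show ?thesis
    unfolding quad_equiv_def
  proof (intro exI[of _ "inverse \<alpha>"] exI[of _ "\<lambda>j. inverse (s (\<tau> j))"] exI[of _ \<tau>] conjI allI impI)
    fix j :: nat
    assume "j < 4"
    then have "s (\<tau> j) \<noteq> 0" "a ! \<tau> j = \<alpha> * b ! j * (s (\<tau> j))\<^sup>2"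
      using h(2,4)[OF \<tau>4] \<sigma>\<tau> by simp_all
    then show "inverse (s (\<tau> j)) \<noteq> 0" "b ! j = inverse \<alpha> * a ! \<tau> j * (inverse (s (\<tau> j)))\<^sup>2"
      using h(1) by (simp_all add: field_simps)
  qed (use h(1) \<tau> in simp_all)
qed

lemma quad_equiv_trans:
  assumes "a \<simeq>\<^sub>q b" "b \<simeq>\<^sub>q c"
  shows "a \<simeq>\<^sub>q c"
proof -
  obtain \<alpha> s \<sigma> where h: "\<alpha> \<noteq> 0" "\<And>i. i < 4 \<Longrightarrow> s i \<noteq> 0" "\<sigma> permutes {..<4}"
    "\<And>i. i < 4 \<Longrightarrow> a ! i = \<alpha> * b ! (\<sigma> i) * (s i)\<^sup>2"
    using assms(1) unfolding quad_equiv_def by blast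
  obtain \<beta> t \<tau> where g: "\<beta> \<noteq> 0" "\<And>i. i < 4 \<Longrightarrow> t i \<noteq> 0" "\<tau> permutes {..<4}"
    "\<And>i. i < 4 \<Longrightarrow> b ! i = \<beta> * c ! (\<tau> i) * (t i)\<^sup>2"
    using assms(2) unfolding quad_equiv_def by blast
  have \<sigma>4: "\<sigma> i < 4" if "i < 4" for i
    using permutes_in_image[OF h(3)] that by simp
  show ?thesis
    unfolding quad_equiv_def
  proof (intro exI[of _ "\<alpha> * \<beta>"] exI[of _ "\<lambda>i. t (\<sigma> i) * s i"] exI[of _ "\<tau> \<circ> \<sigma>"] conjI allI impI)
    fix i :: nat
    assume "i < 4"
    then show "t (\<sigma> i) * s i \<noteq> 0" "a ! i = \<alpha> * \<beta> * c ! (\<tau> \<circ> \<sigma>) i * (t (\<sigma> i) * s i)\<^sup>2"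
      using h(2,4) g(2,4)[OF \<sigma>4] by (simp_all add: power_mult_distrib ac_simps)
  qed (use h(1,3) g(1,3) permutes_compose in auto)
qed

lemma has_rational_point_if_quad_equiv:
  assumes "a \<simeq>\<^sub>q b" "has_rational_point b"
  shows "has_rational_point a"
proof -
  obtain \<alpha> s \<sigma> where h: "\<alpha> \<noteq> 0" "\<And>i. i < 4 \<Longrightarrow> s i \<noteq> 0" "\<sigma> permutes {..<4}"
    "\<And>i. i < 4 \<Longrightarrow> a ! i = \<alpha> * b ! (\<sigma> i) * (s i)\<^sup>2"
    using assms(1) unfolding quad_equiv_def by blast
  obtain x where x: "length x = 4" "\<exists>i<4. x ! i \<noteq> 0" "(\<Sum>i<4. b ! i * (x ! i)\<^sup>2) = 0"
    using assms(2) unfolding has_rational_point_def by blast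
  have \<sigma>4: "\<sigma> i < 4" if "i < 4" for i
    using permutes_in_image[OF h(3)] that by simp
  define y where "y = map (\<lambda>i. x ! \<sigma> i / s i) [0..<4]"
  have y: "y ! i = x ! \<sigma> i / s i" if "i < 4" for i
    using that by (simp add: y_def)
  have "\<exists>i<4. y ! i \<noteq> 0"
  proof -
    obtain j where j: "j < 4" "x ! j \<noteq> 0"
      using x(2) by blast
    have "inv \<sigma> j < 4" "\<sigma> (inv \<sigma> j) = j"
      using permutes_in_image[OF permutes_inv[OF h(3)]] permutes_inverses(1)[OF h(3)] j(1) by simp_all
    then show ?thesis
      using y h(2) j(2) by fastforce
  qed
  moreover have "(\<Sum>i<4. a ! i * (y ! i)\<^sup>2) = \<alpha> * (\<Sum>i<4. b ! \<sigma> i * (x ! \<sigma> i)\<^sup>2)"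
    by (simp add: sum_distrib_left h(2,4) y power_divide)
  moreover have "(\<Sum>i<4. b ! \<sigma> i * (x ! \<sigma> i)\<^sup>2) = (\<Sum>j<4. b ! j * (x ! j)\<^sup>2)"
    using sum.permute[OF h(3), of "\<lambda>j. b ! j * (x ! j)\<^sup>2"] by simp
  ultimately show ?thesis
    unfolding has_rational_point_def using x(3) by (intro exI[of _ y]) (simp add: y_def)
qed

lemma has_rational_point_quad_equiv:
  "a \<simeq>\<^sub>q b \<Longrightarrow> has_rational_point a \<longleftrightarrow> has_rational_point b"
  using has_rational_point_if_quad_equiv quad_equiv_sym by blast

lemma quad_equiv_rescale:
  assumes "\<alpha> \<noteq> 0" "\<And>i. i < 4 \<Longrightarrow> s i \<noteq> 0 \<and> a ! i = \<alpha> * b ! i * (s i)\<^sup>2"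
  shows "a \<simeq>\<^sub>q b"
  unfolding quad_equiv_def using assms permutes_id by (metis id_apply)

lemma quad_equiv_mset:
  assumes "length a = 4" "mset a = mset b"
  shows "a \<simeq>\<^sub>q b"
proof -
  obtain p where p: "p permutes {..<length b}" "permute_list p b = a"
    using mset_eq_permutation[OF assms(2)] .
  have "length b = 4"
    using assms by (metis size_mset)
  then show ?thesis
    unfolding quad_equiv_def using p
    by (intro exI[of _ 1] exI[of _ "\<lambda>_. 1"] exI[of _ p]) (auto simp: permute_list_nth)
qed

section \<open>Isotropy and congruences modulo 16\<close>

definition isotropic_mod16 :: "int list \<Rightarrow> bool" where
  "isotropic_mod16 c \<longleftrightarrow>
     (\<exists>x. length x = 4 \<and> (\<exists>i<4. odd (x ! i)) \<and> [(\<Sum>i<4. c ! i * (x ! i)\<^sup>2) = 0] (mod 16))"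

lemma has_rational_point_of_square:
  fixes a x :: "'a::field list"
  assumes "length x = 4" "j < 4" "x ! j = 0" "q \<noteq> 0"
    and sq: "a ! j * - (\<Sum>i<4. a ! i * (x ! i)\<^sup>2) = q\<^sup>2"
  shows "has_rational_point a"
proof -
  define R where "R = (\<Sum>i\<in>{..<4} - {j}. a ! i * (x ! i)\<^sup>2)"
  have R: "(\<Sum>i<4. a ! i * (x ! i)\<^sup>2) = R"
    using sum.remove[of "{..<4}" j "\<lambda>i. a ! i * (x ! i)\<^sup>2"] assms(2,3) by (simp add: R_def)
  have "a ! j \<noteq> 0"
    using sq assms(4) by auto
  define y where "y = x[j := q / a ! j]"
  have "(\<Sum>i<4. a ! i * (y ! i)\<^sup>2) = a ! j * (q / a ! j)\<^sup>2 + R"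
    using sum.remove[of "{..<4}" j "\<lambda>i. a ! i * (y ! i)\<^sup>2"] assms(1,2)
    by (simp add: y_def R_def)
  also have "a ! j * (q / a ! j)\<^sup>2 = q\<^sup>2 / a ! j"
    by (simp add: power2_eq_square)
  also have "\<dots> = - R"
    using sq \<open>a ! j \<noteq> 0\<close> unfolding R by (metis nonzero_mult_div_cancel_left)
  finally have "(\<Sum>i<4. a ! i * (y ! i)\<^sup>2) = 0"
    by simp
  then show ?thesis
    unfolding has_rational_point_def using assms \<open>a ! j \<noteq> 0\<close>
    by (intro exI[of _ y]) (auto simp: y_def)
qed

lemma mult_neg_eq_pow4_cong_1_mod_8:
  fixes c x r :: int
  assumes "\<not> 4 dvd c" "odd x" "[c * x\<^sup>2 + r = 0] (mod 16)"
  obtains k t where "[t = 1] (mod 8)" "c * - r = 4 ^ k * t"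
proof -
  obtain m where "c * x\<^sup>2 + r = 16 * m"
    using assms(3) by (metis cong_0_iff dvd_def)
  then have m: "r = 16 * m - c * x\<^sup>2"
    by simp
  show ?thesis
  proof (cases "odd c")
    case True
    have "c * - r = (c * x)\<^sup>2 - 8 * (2 * m * c)"
      unfolding m by (simp add: algebra_simps power2_eq_square)
    moreover have "[(c * x)\<^sup>2 - 8 * (2 * m * c) = 1 - 0] (mod 8)"
      using True assms(2) by (intro cong_diff odd_square_cong_1_mod_8) (simp_all add: cong_0_iff)
    ultimately show ?thesis
      using that[of _ 0] by simp
  next
    case False
    then obtain u where c: "c = 2 * u"
      by blast
    have "odd u"
      using assms(1) by (auto simp: c)
    have "c * - r = 4 * ((u * x)\<^sup>2 - 8 * (m * u))"
      unfolding m by (simp add: c algebra_simps power2_eq_square)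
    moreover have "[(u * x)\<^sup>2 - 8 * (m * u) = 1 - 0] (mod 8)"
      using \<open>odd u\<close> assms(2) by (intro cong_diff odd_square_cong_1_mod_8) (simp_all add: cong_0_iff)
    ultimately show ?thesis
      using that[of _ 1] by simp
  qed
qed

lemma Q2_square_of_pow4_mult:
  assumes "[t = 1] (mod 8)"
  obtains q :: Q2 where "q \<noteq> 0" "of_int (4 ^ k * t) = q\<^sup>2"
proof -
  obtain y :: Q2 where y: "of_int t = y\<^sup>2"
    using Q2_square_of_int[OF assms] .
  have "y \<noteq> 0"
    using y assms by (auto simp: cong_def)
  have "(2 :: Q2) ^ k * 2 ^ k = 4 ^ k"
    by (simp flip: power_mult_distrib)
  then have "of_int (4 ^ k * t) = 2 ^ k * 2 ^ k * y\<^sup>2"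
    using y by simp
  also have "\<dots> = (2 ^ k * y)\<^sup>2"
    by (simp add: power2_eq_square)
  finally show ?thesis
    using that[of "2 ^ k * y"] \<open>y \<noteq> 0\<close> by simp
qed

lemma has_rational_point_of_isotropic_mod16:
  fixes c :: "int list"
  assumes "\<And>i. i < 4 \<Longrightarrow> \<not> 4 dvd c ! i" "length c = 4" "isotropic_mod16 c"
  shows "has_rational_point (map of_int c :: Q2 list)"
proof -
  obtain x j where x: "length x = 4" "j < 4" "odd (x ! j)"
    "[(\<Sum>i<4. c ! i * (x ! i)\<^sup>2) = 0] (mod 16)"
    using assms(3) unfolding isotropic_mod16_def by blast
  define x0 where "x0 = x[j := 0]"
  define r where "r = (\<Sum>i<4. c ! i * (x0 ! i)\<^sup>2)"
  have "(\<Sum>i<4. c ! i * (x ! i)\<^sup>2) = c ! j * (x ! j)\<^sup>2 + r"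
    using sum.remove[of "{..<4}" j "\<lambda>i. c ! i * (x ! i)\<^sup>2"]
      sum.remove[of "{..<4}" j "\<lambda>i. c ! i * (x0 ! i)\<^sup>2"] x(1,2)
    by (simp add: r_def x0_def)
  then obtain k t where "[t = 1] (mod 8)" "c ! j * - r = 4 ^ k * t"
    using mult_neg_eq_pow4_cong_1_mod_8[OF assms(1)[OF x(2)] x(3)] x(4) by metis
  then obtain q :: Q2 where q: "q \<noteq> 0" "of_int (c ! j * - r) = q\<^sup>2"
    using Q2_square_of_pow4_mult by metis
  have "(map of_int c :: Q2 list) ! j * - (\<Sum>i<4. map of_int c ! i * (map of_int x0 ! i)\<^sup>2) = q\<^sup>2"
    using q(2) assms(2) x(1,2) by (simp add: r_def x0_def)
  then show ?thesis
    using x(1,2) q(1) by (intro has_rational_point_of_square[of "map of_int x0" j q]) (simp_all add: x0_def)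
qed

lemma Fract_common_denominator:
  fixes xs :: "'a::idom fract list"
  obtains d ys where "d \<noteq> 0" "map (\<lambda>v. v * Fract d 1) xs = map (\<lambda>p. Fract p 1) ys"
proof (induction xs arbitrary: thesis)
  case Nil
  show ?case
    by (rule Nil[of 1 "[]"]) simp_all
next
  case (Cons x xs)
  obtain d ys where d: "d \<noteq> 0" "map (\<lambda>v. v * Fract d 1) xs = map (\<lambda>p. Fract p 1) ys"
    using Cons.IH by blast
  obtain p q where x: "x = Fract p q" "q \<noteq> 0"
    by (cases x)
  have "map (\<lambda>v. v * Fract (q * d) 1) xs = map (\<lambda>v. v * Fract d 1 * Fract q 1) xs"
    by (simp add: mult.assoc mult.commute)
  also have "\<dots> = map (\<lambda>p. Fract (p * q) 1) ys"
    using arg_cong[OF d(2), of "map (\<lambda>v. v * Fract q 1)"] by (simp add: comp_def)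
  finally show ?case
    using Cons.prems[of "q * d" "p * d # map (\<lambda>p. p * q) ys"] d(1) x
    by (simp add: comp_def eq_fract mult.commute mult.left_commute)
qed

lemma z2_to_Q2_sum [simp]: "z2_to_Q2 (\<Sum>i\<in>A. f i) = (\<Sum>i\<in>A. z2_to_Q2 (f i))"
  by (induction A rule: infinite_finite_induct) simp_all

lemma z2_cong_sum:
  "(\<And>i. i \<in> A \<Longrightarrow> z2_cong n (f i) (g i)) \<Longrightarrow> z2_cong n (\<Sum>i\<in>A. f i) (\<Sum>i\<in>A. g i)"
  by (induction A rule: infinite_finite_induct) (auto simp: z2_cong_zero intro: z2_cong_add)

lemma z2_primitive_zero:
  fixes b y :: "nat \<Rightarrow> z2"
  assumes "(\<Sum>i<4. b i * (y i)\<^sup>2) = 0" "i < 4" "y i \<noteq> 0"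
  obtains w j where "(\<Sum>i<4. b i * (w i)\<^sup>2) = 0" "j < 4" "z2_cong 1 (w j) 1"
proof -
  have "\<exists>w j. (\<Sum>i<4. b i * (w i)\<^sup>2) = 0 \<and> j < 4 \<and> z2_cong 1 (w j) 1"
    if "(\<Sum>i<4. b i * (y i)\<^sup>2) = 0" "i < 4" "\<not> z2_cong n (y i) 0" for n y i
    using that
  proof (induction n arbitrary: y i)
    case 0
    then show ?case
      using z2_cong_0 by blast
  next
    case (Suc n)
    show ?case
    proof (cases "\<exists>j<4. z2_cong 1 (y j) 1")
      case False
      then have "\<forall>j. \<exists>h. j < 4 \<longrightarrow> y j = 2 * h"
        using z2_cong_parity z2_pow_dvd_if_cong_0[of 1] by (metis dvd_def power_one_right)
      then obtain h where h: "\<And>j. j < 4 \<Longrightarrow> y j = 2 * h j"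
        by metis
      have "4 * (\<Sum>j<4. b j * (h j)\<^sup>2) = (\<Sum>j<4. b j * (y j)\<^sup>2)"
        by (simp add: sum_distrib_left h power_mult_distrib ac_simps)
      then have "(\<Sum>j<4. b j * (h j)\<^sup>2) = 0"
        using Suc.prems(1) by simp
      moreover have "\<not> z2_cong n (h i) 0"
      proof
        assume "z2_cong n (h i) 0"
        then obtain v where "y i = 2 ^ Suc n * v"
          using z2_pow_dvd_if_cong_0 h Suc.prems(2) by (fastforce simp: dvd_def)
        then show False
          using Suc.prems(3) z2_cong_pow_mult[of "Suc n" v] by simp
      qed
      ultimately show ?thesis
        using Suc.IH Suc.prems(2) by blast
    qed (use Suc.prems(1) in blast)
  qed
  moreover obtain n where "\<not> z2_cong n (y i) 0"
    using assms(3) z2_eq_0_if_cong by blast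
  ultimately show ?thesis
    using assms(1,2) that by blast
qed

lemma z2_zero_of_Q2_zero:
  fixes b :: "nat \<Rightarrow> z2" and x :: "Q2 list"
  assumes "length x = 4" "i < 4" "x ! i \<noteq> 0" "(\<Sum>i<4. z2_to_Q2 (b i) * (x ! i)\<^sup>2) = 0"
  obtains y where "(\<Sum>i<4. b i * (y i)\<^sup>2) = 0" "y i \<noteq> 0"
proof -
  obtain d ys where d: "d \<noteq> 0" "map (\<lambda>v. v * Fract d 1) x = map (\<lambda>p. Fract p 1) ys"
    by (rule Fract_common_denominator)
  have ys: "z2_to_Q2 (ys ! i) = x ! i * z2_to_Q2 d" if "i < 4" for i
    using arg_cong[OF d(2), of length] arg_cong[OF d(2), of "\<lambda>l. l ! i"] assms(1) that
    by (auto simp: z2_to_Q2_def)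
  have "z2_to_Q2 (\<Sum>i<4. b i * (ys ! i)\<^sup>2) = (z2_to_Q2 d)\<^sup>2 * (\<Sum>i<4. z2_to_Q2 (b i) * (x ! i)\<^sup>2)"
    by (simp add: ys sum_distrib_left power_mult_distrib ac_simps)
  then have "z2_to_Q2 (\<Sum>i<4. b i * (ys ! i)\<^sup>2) = 0"
    by (simp only: assms(4) mult_zero_right)
  then have "(\<Sum>i<4. b i * (ys ! i)\<^sup>2) = 0"
    by (simp only: z2_to_Q2_eq_0_iff)
  moreover have "z2_to_Q2 (ys ! i) \<noteq> 0"
    using ys[OF assms(2)] assms(3) d(1) by simp
  ultimately show ?thesis
    using that by simp
qed

lemma isotropic_mod16_of_primitive_zero:
  fixes c :: "int list" and w :: "nat \<Rightarrow> z2"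
  assumes "(\<Sum>i<4. of_int (c ! i) * (w i)\<^sup>2) = 0" "j < 4" "z2_cong 1 (w j) 1"
  shows "isotropic_mod16 c"
proof -
  obtain k where k: "\<And>i. z2_cong 4 (w i) (k i)"
    using choice[of "\<lambda>i k. z2_cong 4 (w i) k"] z2_cong_exists by blast
  have "z2_cong 4 (\<Sum>i<4. of_int (c ! i) * (w i)\<^sup>2) (\<Sum>i<4. c ! i * (k i)\<^sup>2)"
    by (intro z2_cong_sum z2_cong_mult z2_cong_of_int z2_cong_power k)
  then have "[(\<Sum>i<4. c ! i * (k i)\<^sup>2) = 0] (mod 16)"
    using assms(1) z2_cong_unique[OF _ z2_cong_zero] by (fastforce simp: cong_sym_eq)
  moreover have "z2_cong 1 (w j) (k j)"
    using z2_cong_mono[OF _ k] by simp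
  then have "odd (k j)"
    using z2_cong_unique[OF _ assms(3)] by (simp add: cong_def odd_iff_mod_2_eq_one)
  ultimately show ?thesis
    unfolding isotropic_mod16_def using assms(2)
    by (intro exI[of _ "map k [0..<4]"]) auto
qed

lemma isotropic_mod16_of_has_rational_point:
  fixes c :: "int list"
  assumes "length c = 4" "has_rational_point (map of_int c :: Q2 list)"
  shows "isotropic_mod16 c"
proof -
  obtain x :: "Q2 list" where x: "length x = 4" "\<exists>i<4. x ! i \<noteq> 0"
    "(\<Sum>i<4. z2_to_Q2 (of_int (c ! i)) * (x ! i)\<^sup>2) = 0"
    using assms unfolding has_rational_point_def by auto
  obtain i where "i < 4" "x ! i \<noteq> 0"
    using x(2) by blast
  then obtain y where y: "(\<Sum>i<4. of_int (c ! i) * (y i)\<^sup>2) = (0 :: z2)" "y i \<noteq> 0"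
    using z2_zero_of_Q2_zero[OF x(1) _ _ x(3)] by blast
  obtain w j where "(\<Sum>i<4. of_int (c ! i) * (w i)\<^sup>2) = (0 :: z2)" "j < 4" "z2_cong 1 (w j) 1"
    using z2_primitive_zero[OF y(1) \<open>i < 4\<close> y(2)] by blast
  then show ?thesis
    by (rule isotropic_mod16_of_primitive_zero)
qed

lemma has_rational_point_iff_isotropic_mod16:
  fixes c :: "int list"
  assumes "\<And>i. i < 4 \<Longrightarrow> \<not> 4 dvd c ! i" "length c = 4"
  shows "has_rational_point (map of_int c :: Q2 list) \<longleftrightarrow> isotropic_mod16 c"
  using has_rational_point_of_isotropic_mod16[OF assms] isotropic_mod16_of_has_rational_point[OF assms(2)]
  by blast

lemma square_mod_16_representative:
  fixes x :: int
  obtains v where "v \<in> {0, 1, 2, 3}" "[x\<^sup>2 = v\<^sup>2] (mod 16)" "odd x \<longleftrightarrow> odd v"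
proof -
  consider "even x" "x\<^sup>2 mod 16 = 0" | "even x" "x\<^sup>2 mod 16 = 4"
    | "odd x" "x\<^sup>2 mod 16 = 1" | "odd x" "x\<^sup>2 mod 16 = 9"
    using square_mod_16_cases[of x] by auto
  then show ?thesis
  proof cases
    case 1
    then show ?thesis
      using that[of 0] by (simp add: cong_def)
  next
    case 2
    then show ?thesis
      using that[of 2] by (simp add: cong_def)
  next
    case 3
    then show ?thesis
      using that[of 1] by (simp add: cong_def)
  next
    case 4
    then show ?thesis
      using that[of 3] by (simp add: cong_def)
  qed
qed

(* Each variable ranges over 0, 1, 2, 3, whose squares 0, 1, 4, 9 represent all squares modulo 16;
   the flag records whether an odd value has been chosen. *)
fun solvable_mod16 :: "bool \<Rightarrow> int \<Rightarrow> int list \<Rightarrow> bool" where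
  "solvable_mod16 b r [] \<longleftrightarrow> b \<and> r mod 16 = 0"
| "solvable_mod16 b r (c # cs) \<longleftrightarrow>
     solvable_mod16 b r cs \<or> solvable_mod16 True (r + c) cs \<or>
     solvable_mod16 b (r + 4 * c) cs \<or> solvable_mod16 True (r + 9 * c) cs"

definition solution_mod16 :: "bool \<Rightarrow> int \<Rightarrow> int list \<Rightarrow> bool" where
  "solution_mod16 b r cs \<longleftrightarrow> (\<exists>xs. length xs = length cs \<and> (b \<or> (\<exists>x\<in>set xs. odd x)) \<and>
     [r + (\<Sum>(c, x)\<leftarrow>zip cs xs. c * x\<^sup>2) = 0] (mod 16))"

lemma solution_mod16_Cons:
  "solution_mod16 b r (c # cs) \<longleftrightarrow> (\<exists>v\<in>{0, 1, 2, 3}. solution_mod16 (b \<or> odd v) (r + c * v\<^sup>2) cs)"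
proof
  assume "solution_mod16 b r (c # cs)"
  then obtain ys where ys: "length ys = Suc (length cs)" "b \<or> (\<exists>y\<in>set ys. odd y)"
    "[r + (\<Sum>(c, x)\<leftarrow>zip (c # cs) ys. c * x\<^sup>2) = 0] (mod 16)"
    unfolding solution_mod16_def by auto
  then obtain x xs where "ys = x # xs"
    by (cases ys) auto
  with ys have x: "length xs = length cs" "b \<or> odd x \<or> (\<exists>y\<in>set xs. odd y)"
    "[r + c * x\<^sup>2 + (\<Sum>(c, x)\<leftarrow>zip cs xs. c * x\<^sup>2) = 0] (mod 16)"
    by (simp_all add: add.assoc)
  obtain v where v: "v \<in> {0, 1, 2, 3}" "[x\<^sup>2 = v\<^sup>2] (mod 16)" "odd x \<longleftrightarrow> odd v"
    by (rule square_mod_16_representative)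
  have "[r + c * v\<^sup>2 + (\<Sum>(c, x)\<leftarrow>zip cs xs. c * x\<^sup>2) =
      r + c * x\<^sup>2 + (\<Sum>(c, x)\<leftarrow>zip cs xs. c * x\<^sup>2)] (mod 16)"
    using v(2) by (intro cong_add cong_mult cong_refl) (rule cong_sym)
  then have "solution_mod16 (b \<or> odd v) (r + c * v\<^sup>2) cs"
    unfolding solution_mod16_def using x v(3) cong_trans by blast
  then show "\<exists>v\<in>{0, 1, 2, 3}. solution_mod16 (b \<or> odd v) (r + c * v\<^sup>2) cs"
    using v(1) by blast
next
  assume "\<exists>v\<in>{0, 1, 2, 3}. solution_mod16 (b \<or> odd v) (r + c * v\<^sup>2) cs"
  then obtain v xs where "length xs = length cs" "b \<or> odd v \<or> (\<exists>x\<in>set xs. odd x)"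
    "[r + c * v\<^sup>2 + (\<Sum>(c, x)\<leftarrow>zip cs xs. c * x\<^sup>2) = 0] (mod 16)"
    unfolding solution_mod16_def by blast
  then show "solution_mod16 b r (c # cs)"
    unfolding solution_mod16_def by (intro exI[of _ "v # xs"]) (auto simp: add.assoc)
qed

lemma solvable_mod16_iff: "solvable_mod16 b r cs \<longleftrightarrow> solution_mod16 b r cs"
proof (induction cs arbitrary: b r)
  case Nil
  then show ?case
    by (simp add: solution_mod16_def cong_def)
next
  case (Cons c cs)
  then show ?case
    by (simp add: solution_mod16_Cons ac_simps)
qed

lemma sum_list_zip_nth:
  "length xs = length ys \<Longrightarrow> (\<Sum>(a, b)\<leftarrow>zip xs ys. f a b) = (\<Sum>i<length xs. f (xs ! i) (ys ! i))"
  by (simp add: sum_list_sum_nth atLeast0LessThan)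

lemma isotropic_mod16_iff_solvable:
  assumes "length c = 4"
  shows "isotropic_mod16 c \<longleftrightarrow> solvable_mod16 False 0 c"
proof -
  have "(\<Sum>(a, y)\<leftarrow>zip c x. a * y\<^sup>2) = (\<Sum>i<4. c ! i * (x ! i)\<^sup>2)"
    and "(\<exists>y\<in>set x. odd y) \<longleftrightarrow> (\<exists>i<4. odd (x ! i))" if "length x = 4" for x :: "int list"
    using sum_list_zip_nth[of c x "\<lambda>a y. a * y\<^sup>2"] that assms by (simp, metis in_set_conv_nth)
  then have "length x = length c \<and> (False \<or> (\<exists>y\<in>set x. odd y)) \<and>
      [0 + (\<Sum>(a, y)\<leftarrow>zip c x. a * y\<^sup>2) = 0] (mod 16) \<longleftrightarrow>
    length x = 4 \<and> (\<exists>i<4. odd (x ! i)) \<and> [(\<Sum>i<4. c ! i * (x ! i)\<^sup>2) = 0] (mod 16)" for x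
    using assms by auto
  then show ?thesis
    unfolding isotropic_mod16_def solvable_mod16_iff solution_mod16_def by blast
qed

lemma quad_equiv_of_square_class_sort:
  fixes s b :: "int list" and \<alpha> :: int
  assumes "length s = 4" "\<alpha> \<noteq> 0" "0 \<notin> set s"
    and "sort (map (\<lambda>x. square_class (\<alpha> * x)) s) = sort b"
  shows "(map of_int s :: Q2 list) \<simeq>\<^sub>q map of_int b"
proof -
  define t where "t = map (\<lambda>x. square_class (\<alpha> * x)) s"
  have "\<exists>q :: Q2. i < 4 \<longrightarrow> q \<noteq> 0 \<and> of_int (\<alpha> * s ! i) = of_int (t ! i) * q\<^sup>2" for i
  proof (cases "i < 4")
    case True
    then have "s ! i \<in> set s"
      using assms(1) by simp
    then have "\<alpha> * s ! i \<noteq> 0"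
      using assms(2,3) by auto
    then obtain q :: Q2 where "q \<noteq> 0" "of_int (\<alpha> * s ! i) = of_int (square_class (\<alpha> * s ! i)) * q\<^sup>2"
      by (rule Q2_square_class)
    then show ?thesis
      using True assms(1) by (auto simp: t_def)
  qed simp
  then obtain q :: "nat \<Rightarrow> Q2" where
    q: "\<And>i. i < 4 \<Longrightarrow> q i \<noteq> 0 \<and> of_int (\<alpha> * s ! i) = of_int (t ! i) * (q i)\<^sup>2"
    using choice[of "\<lambda>i q. i < 4 \<longrightarrow> q \<noteq> 0 \<and> of_int (\<alpha> * s ! i) = of_int (t ! i) * q\<^sup>2"]
    by blast
  have st: "(map of_int s :: Q2 list) \<simeq>\<^sub>q map of_int t"
  proof (rule quad_equiv_rescale)
    fix i :: nat
    assume "i < 4"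
    then show "q i \<noteq> 0 \<and> map of_int s ! i = inverse (of_int \<alpha>) * map of_int t ! i * (q i)\<^sup>2"
      using q[of i] assms(1,2) by (simp add: t_def field_simps)
  qed (use assms(2) in simp)
  have "mset t = mset b"
    using assms(4) by (metis mset_sort t_def)
  then have "mset (map of_int t :: Q2 list) = mset (map of_int b)"
    by (simp only: mset_map)
  then have "(map of_int t :: Q2 list) \<simeq>\<^sub>q map of_int b"
    using assms(1) by (intro quad_equiv_mset) (simp_all add: t_def)
  with st show ?thesis
    by (rule quad_equiv_trans)
qed

lemma z2_form_equiv_sorted_classes:
  assumes "length a = 4" "\<And>i. i < 4 \<Longrightarrow> a ! i \<noteq> 0"
  obtains s where "length s = 4" "sorted s" "set s \<subseteq> set square_class_reps"
    "map z2_to_Q2 a \<simeq>\<^sub>q map of_int s"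
proof -
  have "\<exists>c q. i < 4 \<longrightarrow>
      c \<in> set square_class_reps \<and> q \<noteq> 0 \<and> z2_to_Q2 (a ! i) = of_int c * q\<^sup>2" for i
    using z2_square_class[OF assms(2)] by metis
  then obtain c q where cq: "\<And>i. i < 4 \<Longrightarrow> c i \<in> set square_class_reps \<and> q i \<noteq> 0 \<and>
      z2_to_Q2 (a ! i) = of_int (c i) * (q i)\<^sup>2"
    by metis
  define t where "t = map c [0..<4]"
  have "map z2_to_Q2 a \<simeq>\<^sub>q map of_int t"
    using cq assms(1) by (intro quad_equiv_rescale[of 1 q]) (simp_all add: t_def)
  moreover have "(map of_int t :: Q2 list) \<simeq>\<^sub>q map of_int (sort t)"
    by (rule quad_equiv_mset) (simp add: t_def, metis mset_map mset_sort)
  ultimately have "map z2_to_Q2 a \<simeq>\<^sub>q map of_int (sort t)"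
    by (rule quad_equiv_trans)
  moreover have "set (sort t) \<subseteq> set square_class_reps"
    using cq by (auto simp: t_def)
  ultimately show ?thesis
    using that[of "sort t"] by (simp add: t_def)
qed

definition anisotropic_forms :: "int list list" where
  "anisotropic_forms = [[1, 1, 1, 1], [1, 1, 5, 5], [1, 1, 2, 2], [1, 1, 10, 10], [1, 3, 2, 6],
     [1, 3, 10, 14], [1, 5, 6, 14]]"

fun sorted_lists :: "nat \<Rightarrow> 'a::linorder list \<Rightarrow> 'a list list" where
  "sorted_lists 0 xs = [[]]"
| "sorted_lists (Suc n) [] = []"
| "sorted_lists (Suc n) (x # xs) = map ((#) x) (sorted_lists n (x # xs)) @ sorted_lists (Suc n) xs"

lemma sorted_lists_complete:
  assumes "sorted xs" "sorted ys" "length ys = n" "set ys \<subseteq> set xs"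
  shows "ys \<in> set (sorted_lists n xs)"
  using assms
proof (induction n xs arbitrary: ys rule: sorted_lists.induct)
  case (3 n x xs)
  obtain y zs where ys: "ys = y # zs"
    using "3.prems"(3) by (cases ys) auto
  show ?case
  proof (cases "y = x")
    case True
    then show ?thesis
      using "3.IH"(1)[of zs] "3.prems" by (auto simp: ys)
  next
    case False
    have "set ys \<subseteq> set xs"
    proof
      fix z
      assume "z \<in> set ys"
      then have "y \<le> z" "z \<in> set (x # xs)" "y \<in> set (x # xs)"
        using "3.prems"(2,4) by (auto simp: ys)
      then show "z \<in> set xs"
        using "3.prems"(1) False by auto
    qed
    then show ?thesis
      using "3.IH"(2)[of ys] "3.prems" by simp
  qed
qed auto

lemma sorted_class_forms_classified:
  "\<forall>s\<in>set (sorted_lists 4 square_class_reps). solvable_mod16 False 0 s \<or>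
     (\<exists>\<alpha>\<in>set square_class_reps. \<exists>b\<in>set anisotropic_forms.
        sort (map (\<lambda>x. square_class (\<alpha> * x)) s) = sort b)"
  by code_simp

lemma anisotropic_forms_not_solvable: "\<forall>b\<in>set anisotropic_forms. \<not> solvable_mod16 False 0 b"
  by code_simp

lemma has_rational_point_iff_solvable_mod16:
  assumes "length c = 4" "set c \<subseteq> set square_class_reps"
  shows "has_rational_point (map of_int c :: Q2 list) \<longleftrightarrow> solvable_mod16 False 0 c"
proof -
  have "\<not> 4 dvd c ! i" if "i < 4" for i
  proof -
    have "c ! i \<in> set square_class_reps"
      using assms that by (metis nth_mem subsetD)
    then show ?thesis
      by (auto simp: square_class_reps_def)
  qed
  then show ?thesis
    using has_rational_point_iff_isotropic_mod16 isotropic_mod16_iff_solvable assms(1) by blast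
qed

lemma sorted_class_form_anisotropic_iff:
  assumes "length s = 4" "sorted s" "set s \<subseteq> set square_class_reps"
  shows "\<not> has_rational_point (map of_int s :: Q2 list) \<longleftrightarrow>
    (\<exists>b\<in>set anisotropic_forms. (map of_int s :: Q2 list) \<simeq>\<^sub>q map of_int b)"
proof
  assume "\<not> has_rational_point (map of_int s :: Q2 list)"
  then have "\<not> solvable_mod16 False 0 s"
    using has_rational_point_iff_solvable_mod16[OF assms(1,3)] by blast
  moreover have "s \<in> set (sorted_lists 4 square_class_reps)"
    using assms by (intro sorted_lists_complete) (auto simp: square_class_reps_def)
  ultimately obtain \<alpha> b where "\<alpha> \<in> set square_class_reps" "b \<in> set anisotropic_forms"
    "sort (map (\<lambda>x. square_class (\<alpha> * x)) s) = sort b"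
    using sorted_class_forms_classified by blast
  moreover have "\<alpha> \<noteq> 0" "0 \<notin> set s"
    using \<open>\<alpha> \<in> set square_class_reps\<close> assms(3) by (auto simp: square_class_reps_def)
  ultimately show "\<exists>b\<in>set anisotropic_forms. (map of_int s :: Q2 list) \<simeq>\<^sub>q map of_int b"
    using quad_equiv_of_square_class_sort[OF assms(1)] by blast
next
  assume "\<exists>b\<in>set anisotropic_forms. (map of_int s :: Q2 list) \<simeq>\<^sub>q map of_int b"
  then obtain b where b: "b \<in> set anisotropic_forms" "(map of_int s :: Q2 list) \<simeq>\<^sub>q map of_int b"
    by blast
  have "length b = 4" "set b \<subseteq> set square_class_reps"
    using b(1) by (auto simp: anisotropic_forms_def square_class_reps_def)
  then have "\<not> has_rational_point (map of_int b :: Q2 list)"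
    using has_rational_point_iff_solvable_mod16 anisotropic_forms_not_solvable b(1) by blast
  then show "\<not> has_rational_point (map of_int s :: Q2 list)"
    using has_rational_point_quad_equiv[OF b(2)] by blast
qed

theorem proposition3p2:
  fixes a :: "z2 list"
  assumes "length a = 4"
    and "a ! 0 * a ! 1 * a ! 2 * a ! 3 \<noteq> 0"
  shows "\<not> has_rational_point (map z2_to_Q2 a) \<longleftrightarrow>
    (\<exists>b \<in> set [[1,1,1,1], [1,1,5,5], [1,1,2,2], [1,1,10,10], [1,3,2,6], [1,3,10,14], [1,5,6,14]].
       map z2_to_Q2 a \<simeq>\<^sub>q (b :: Q2 list))"
proof -
  have "a ! i \<noteq> 0" if "i < 4" for i
    using assms(2) that by (auto simp: less_Suc_eq numeral_eq_Suc)
  then obtain s where s: "length s = 4" "sorted s" "set s \<subseteq> set square_class_reps"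
    "map z2_to_Q2 a \<simeq>\<^sub>q map of_int s"
    using z2_form_equiv_sorted_classes assms(1) by metis
  have "\<not> has_rational_point (map z2_to_Q2 a) \<longleftrightarrow> \<not> has_rational_point (map of_int s :: Q2 list)"
    using has_rational_point_quad_equiv[OF s(4)] by blast
  also have "\<dots> \<longleftrightarrow> (\<exists>b\<in>set anisotropic_forms. (map of_int s :: Q2 list) \<simeq>\<^sub>q map of_int b)"
    by (rule sorted_class_form_anisotropic_iff[OF s(1-3)])
  also have "\<dots> \<longleftrightarrow> (\<exists>b\<in>set anisotropic_forms. map z2_to_Q2 a \<simeq>\<^sub>q map of_int b)"
    using s(4) quad_equiv_trans quad_equiv_sym by blast
  also have "\<dots> \<longleftrightarrow> (\<exists>b \<in> set [[1,1,1,1], [1,1,5,5], [1,1,2,2], [1,1,10,10], [1,3,2,6], [1,3,10,14],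
      [1,5,6,14]]. map z2_to_Q2 a \<simeq>\<^sub>q (b :: Q2 list))"
    by (simp add: anisotropic_forms_def)
  finally show ?thesis .
qed

end
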